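(* Let $\mathfrak{U}$ be a Banach algebra such that $\mathfrak{U}^\sharp$ is symmetrically pseudo-amenable. Then every bounded Jordan derivation from $\mathfrak{U}$ into a symmetric Banach $\mathfrak{U}$-bimodule $X$ is a derivation.
   Context: A Banach $\mathfrak{U}$-bimodule $X$ is symmetric if $ax=xa$ for all $a\in\mathfrak{U}$, $x\in X$. $\mathfrak{U}^\sharp=\mathfrak{U}\oplus\mathbb{C}1$ is the unitization of $\mathfrak{U}$ with the $\ell^1$-norm (a unit is adjoined even if $\mathfrak{U}$ is unital). A linear map $\delta:\mathfrak{U}\to X$ is a derivation if $\delta(ab)=\delta(a)b+a\delta(b)$, and a Jordan derivation if $\delta(ab+ba)=\delta(a)b+a\delta(b)+\delta(b)a+b\delta(a)$, for all $a,b$. For a Banach algebra $\mathfrak{A}$, $\mathfrak{A}\widehat{\otimes}\mathfrak{A}$ is the projective tensor product with $a(b\otimes c)=ab\otimes c$, $(b\otimes c)a=b\otimes ca$, $\pi(b\otimes c)=bc$ (extended linearly and continuously); the flip is $(b\otimes c)^\circ=c\otimes b$ and $\mathbf{t}$ is symmetric if $\mathbf{t}^\circ=\mathbf{t}$. A symmetric approximate diagonal is a net $\{\mathbf{t}_\lambda\}$ (not necessarily bounded) of symmetric elements with $a\mathbf{t}_\lambda-\mathbf{t}_\lambda a\to0$ and $\pi(\mathbf{t}_\lambda)a\to a$ for all $a\in\mathfrak{A}$; $\mathfrak{A}$ is symmetrically pseudo-amenable if it has one. *)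

theory Defs
  imports Complex_Main
begin

definition cvs :: "(complex \<Rightarrow> 'v::real_normed_vector \<Rightarrow> 'v) \<Rightarrow> bool" where
  "cvs sc \<longleftrightarrow>
     (\<forall>r x. sc (complex_of_real r) x = scaleR r x) \<and>
     (\<forall>c x y. sc c (x + y) = sc c x + sc c y) \<and>
     (\<forall>c d x. sc (c + d) x = sc c x + sc d x) \<and>
     (\<forall>c d x. sc (c * d) x = sc c (sc d x)) \<and>
     (\<forall>c x. norm (sc c x) = cmod c * norm x)"

definition cbanach_algebra :: "(complex \<Rightarrow> 'a::{real_normed_algebra,banach} \<Rightarrow> 'a) \<Rightarrow> bool" where
  "cbanach_algebra sc \<longleftrightarrow> cvs sc \<and>
     (\<forall>c x y. sc c (x * y) = sc c x * y \<and> sc c (x * y) = x * sc c y)"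

(* Unitization U# = U \<oplus> C1, represented by pairs, with l1 norm *)
definition uadd :: "'a::{real_normed_algebra} \<times> complex \<Rightarrow> 'a \<times> complex \<Rightarrow> 'a \<times> complex" where
  "uadd u v = (fst u + fst v, snd u + snd v)"

definition usub :: "'a::{real_normed_algebra} \<times> complex \<Rightarrow> 'a \<times> complex \<Rightarrow> 'a \<times> complex" where
  "usub u v = (fst u - fst v, snd u - snd v)"

definition uscale :: "(complex \<Rightarrow> 'a \<Rightarrow> 'a) \<Rightarrow> complex \<Rightarrow> 'a::{real_normed_algebra} \<times> complex \<Rightarrow> 'a \<times> complex" where
  "uscale sc c u = (sc c (fst u), c * snd u)"

definition umult :: "(complex \<Rightarrow> 'a \<Rightarrow> 'a) \<Rightarrow> 'a::{real_normed_algebra} \<times> complex \<Rightarrow> 'a \<times> complex \<Rightarrow> 'a \<times> complex" where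
  "umult sc u v = (fst u * fst v + sc (snd u) (fst v) + sc (snd v) (fst u), snd u * snd v)"

definition unorm :: "'a::{real_normed_algebra} \<times> complex \<Rightarrow> real" where
  "unorm u = norm (fst u) + cmod (snd u)"

(* complex bilinear forms on U# x U# of norm at most 1; by Hahn-Banach these norm the
   projective tensor product U# \<otimes>^ U# (its dual is the space of bounded bilinear forms) *)
definition cbilinear :: "(complex \<Rightarrow> 'a \<Rightarrow> 'a) \<Rightarrow> ('a::{real_normed_algebra} \<times> complex \<Rightarrow> 'a \<times> complex \<Rightarrow> complex) \<Rightarrow> bool" where
  "cbilinear sc \<phi> \<longleftrightarrow>
     (\<forall>u v w. \<phi> (uadd u v) w = \<phi> u w + \<phi> v w) \<and>
     (\<forall>u v w. \<phi> u (uadd v w) = \<phi> u v + \<phi> u w) \<and>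
     (\<forall>c u v. \<phi> (uscale sc c u) v = c * \<phi> u v) \<and>
     (\<forall>c u v. \<phi> u (uscale sc c v) = c * \<phi> u v)"

definition pball :: "(complex \<Rightarrow> 'a \<Rightarrow> 'a) \<Rightarrow> ('a::{real_normed_algebra} \<times> complex \<Rightarrow> 'a \<times> complex \<Rightarrow> complex) set" where
  "pball sc = {\<phi>. cbilinear sc \<phi> \<and> (\<forall>u v. cmod (\<phi> u v) \<le> unorm u * unorm v)}"

(* An element of the projective tensor product U# \<otimes>^ U# is represented by a sequence
   (u_n, v_n) with sum ||u_n|| ||v_n|| < \<infinity>, standing for sum u_n \<otimes> v_n. *)
type_synonym 'a tens = "nat \<Rightarrow> ('a \<times> complex) \<times> ('a \<times> complex)"

definition ptensor :: "'a::{real_normed_algebra} tens \<Rightarrow> bool" where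
  "ptensor r \<longleftrightarrow> summable (\<lambda>n. unorm (fst (r n)) * unorm (snd (r n)))"

definition pair :: "('a::{real_normed_algebra} \<times> complex \<Rightarrow> 'a \<times> complex \<Rightarrow> complex) \<Rightarrow> 'a tens \<Rightarrow> complex" where
  "pair \<phi> r = (\<Sum>n. \<phi> (fst (r n)) (snd (r n)))"

definition pdist :: "(complex \<Rightarrow> 'a \<Rightarrow> 'a) \<Rightarrow> 'a::{real_normed_algebra} tens \<Rightarrow> 'a tens \<Rightarrow> real" where
  "pdist sc r s = (SUP \<phi>\<in>pball sc. cmod (pair \<phi> r - pair \<phi> s))"

definition flip :: "'a tens \<Rightarrow> 'a tens" where
  "flip r = (\<lambda>n. (snd (r n), fst (r n)))"

definition lact :: "(complex \<Rightarrow> 'a \<Rightarrow> 'a) \<Rightarrow> 'a::{real_normed_algebra} \<times> complex \<Rightarrow> 'a tens \<Rightarrow> 'a tens" where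
  "lact sc u r = (\<lambda>n. (umult sc u (fst (r n)), snd (r n)))"

definition ract :: "(complex \<Rightarrow> 'a \<Rightarrow> 'a) \<Rightarrow> 'a::{real_normed_algebra} tens \<Rightarrow> 'a \<times> complex \<Rightarrow> 'a tens" where
  "ract sc r u = (\<lambda>n. (fst (r n), umult sc (snd (r n)) u))"

definition ppi :: "(complex \<Rightarrow> 'a \<Rightarrow> 'a) \<Rightarrow> 'a::{real_normed_algebra} tens \<Rightarrow> 'a \<times> complex" where
  "ppi sc r = ((\<Sum>n. fst (umult sc (fst (r n)) (snd (r n)))),
               (\<Sum>n. snd (umult sc (fst (r n)) (snd (r n)))))"

(* symmetric approximate diagonal for U#, as a net given by a proper filter F and a map t *)
definition sym_approx_diag :: "(complex \<Rightarrow> 'a \<Rightarrow> 'a) \<Rightarrow> 'i filter \<Rightarrow> ('i \<Rightarrow> 'a::{real_normed_algebra} tens) \<Rightarrow> bool" where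
  "sym_approx_diag sc F t \<longleftrightarrow>
     F \<noteq> bot \<and>
     (\<forall>\<^sub>F i in F. ptensor (t i) \<and> pdist sc (flip (t i)) (t i) = 0) \<and>
     (\<forall>u. ((\<lambda>i. pdist sc (lact sc u (t i)) (ract sc (t i) u)) \<longlongrightarrow> 0) F) \<and>
     (\<forall>u. ((\<lambda>i. unorm (usub (umult sc (ppi sc (t i)) u) u)) \<longlongrightarrow> 0) F)"

definition sym_pseudo_amenable_unitization :: "(complex \<Rightarrow> 'a::{real_normed_algebra} \<Rightarrow> 'a) \<Rightarrow> bool" where
  "sym_pseudo_amenable_unitization sc \<longleftrightarrow>
     (\<exists>(F :: 'a tens filter) t. sym_approx_diag sc F t)"

definition banach_bimodule ::
  "(complex \<Rightarrow> 'a \<Rightarrow> 'a) \<Rightarrow> (complex \<Rightarrow> 'x \<Rightarrow> 'x) \<Rightarrow> ('a::{real_normed_algebra} \<Rightarrow> 'x::banach \<Rightarrow> 'x) \<Rightarrow> ('x \<Rightarrow> 'a \<Rightarrow> 'x) \<Rightarrow> bool" where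
  "banach_bimodule sc scX lm rm \<longleftrightarrow> cvs scX \<and>
     (\<forall>a b x. lm (a + b) x = lm a x + lm b x) \<and>
     (\<forall>a x y. lm a (x + y) = lm a x + lm a y) \<and>
     (\<forall>c a x. lm (sc c a) x = scX c (lm a x)) \<and>
     (\<forall>c a x. lm a (scX c x) = scX c (lm a x)) \<and>
     (\<forall>a b x. rm x (a + b) = rm x a + rm x b) \<and>
     (\<forall>a x y. rm (x + y) a = rm x a + rm y a) \<and>
     (\<forall>c a x. rm x (sc c a) = scX c (rm x a)) \<and>
     (\<forall>c a x. rm (scX c x) a = scX c (rm x a)) \<and>
     (\<forall>a b x. lm (a * b) x = lm a (lm b x)) \<and>
     (\<forall>a b x. rm x (a * b) = rm (rm x a) b) \<and>
     (\<forall>a b x. rm (lm a x) b = lm a (rm x b)) \<and>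
     (\<forall>a x. norm (lm a x) \<le> norm a * norm x) \<and>
     (\<forall>a x. norm (rm x a) \<le> norm x * norm a)"

definition symmetric_bimodule :: "('a \<Rightarrow> 'x \<Rightarrow> 'x) \<Rightarrow> ('x \<Rightarrow> 'a \<Rightarrow> 'x) \<Rightarrow> bool" where
  "symmetric_bimodule lm rm \<longleftrightarrow> (\<forall>a x. lm a x = rm x a)"

definition clinear_map :: "(complex \<Rightarrow> 'a \<Rightarrow> 'a) \<Rightarrow> (complex \<Rightarrow> 'x \<Rightarrow> 'x) \<Rightarrow> ('a::real_normed_vector \<Rightarrow> 'x::real_normed_vector) \<Rightarrow> bool" where
  "clinear_map sc scX d \<longleftrightarrow> (\<forall>a b. d (a + b) = d a + d b) \<and> (\<forall>c a. d (sc c a) = scX c (d a))"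

definition bounded_map :: "('a::real_normed_vector \<Rightarrow> 'x::real_normed_vector) \<Rightarrow> bool" where
  "bounded_map d \<longleftrightarrow> (\<exists>K. \<forall>a. norm (d a) \<le> K * norm a)"

definition jordan_derivation :: "('a \<Rightarrow> 'x \<Rightarrow> 'x) \<Rightarrow> ('x \<Rightarrow> 'a \<Rightarrow> 'x) \<Rightarrow> ('a::real_normed_algebra \<Rightarrow> 'x::real_normed_vector) \<Rightarrow> bool" where
  "jordan_derivation lm rm d \<longleftrightarrow>
     (\<forall>a b. d (a * b + b * a) = rm (d a) b + lm a (d b) + rm (d b) a + lm b (d a))"

definition derivation :: "('a \<Rightarrow> 'x \<Rightarrow> 'x) \<Rightarrow> ('x \<Rightarrow> 'a \<Rightarrow> 'x) \<Rightarrow> ('a::real_normed_algebra \<Rightarrow> 'x::real_normed_vector) \<Rightarrow> bool" where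
  "derivation lm rm d \<longleftrightarrow> (\<forall>a b. d (a * b) = rm (d a) b + lm a (d b))"

end

theory Submission
  imports Defs
begin

text \<open>
  For a Jordan derivation \<open>D\<close> into a symmetric bimodule, \<open>D(ab + ba) = 2(a\<cdot>Db + b\<cdot>Da)\<close>, so \<open>D\<close> is a
  derivation as soon as it annihilates every commutator \<open>c = ab - ba\<close>. By Hahn--Banach it suffices
  to show \<open>f(Dc) = 0\<close> for every bounded functional \<open>f\<close>. On the unitization consider the bounded
  bilinear form \<open>\<phi>(u,v) = f(D(ucv))\<close>. The Jordan triple identity
  \<open>D(ucv + vcu) = (uv + vu)\<cdot>Dc + c\<cdot>D(uv + vu)\<close> makes the symmetric part of \<open>\<phi>\<close> that of the form
  \<open>L(uv)\<close>, where \<open>L(w) = f(w\<cdot>Dc + c\<cdot>Dw)\<close>; and since \<open>c\<close> is a commutator, the transpose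
  \<open>\<phi>(v,u) = \<psi>(u, va) - \<psi>(au, v)\<close> with \<open>\<psi>(u,v) = f(D(vbu))\<close>. Pairing with a symmetric approximate
  diagonal \<open>t\<close>, the first description tends to \<open>L(1) = f(Dc)\<close> because \<open>\<pi>(t) \<rightarrow> 1\<close>, and the second
  to \<open>0\<close> because \<open>at - ta \<rightarrow> 0\<close>.
\<close>

section \<open>Hahn--Banach\<close>

text \<open>Partial linear functionals are encoded by their graphs, so that Zorn's lemma applies to the
  inclusion order.\<close>

definition dominated_linear_graphs :: "'v::real_normed_vector \<Rightarrow> ('v \<times> real) set set" where
  "dominated_linear_graphs y = {G. (y, norm y) \<in> G \<and> single_valued G \<and>
     (\<forall>x r x' r'. (x, r) \<in> G \<longrightarrow> (x', r') \<in> G \<longrightarrow> (x + x', r + r') \<in> G) \<and>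
     (\<forall>x r a. (x, r) \<in> G \<longrightarrow> (a *\<^sub>R x, a * r) \<in> G) \<and>
     (\<forall>x r. (x, r) \<in> G \<longrightarrow> r \<le> norm x)}"

lemma dominated_linear_graphsD:
  assumes "G \<in> dominated_linear_graphs y"
  shows "(y, norm y) \<in> G"
    and "(x, r) \<in> G \<Longrightarrow> (x, s) \<in> G \<Longrightarrow> r = s"
    and "(x, r) \<in> G \<Longrightarrow> (x', r') \<in> G \<Longrightarrow> (x + x', r + r') \<in> G"
    and "(x, r) \<in> G \<Longrightarrow> (a *\<^sub>R x, a * r) \<in> G"
    and "(x, r) \<in> G \<Longrightarrow> r \<le> norm x"
  using assms unfolding dominated_linear_graphs_def single_valued_def by blast+

lemma dominated_linear_graphs_Union_chain:
  assumes C: "C \<subseteq> dominated_linear_graphs y" "C \<noteq> {}" and chain: "chain\<^sub>\<subseteq> C"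
  shows "\<Union>C \<in> dominated_linear_graphs y"
proof -
  have in_one: "\<exists>G\<in>C. p \<in> G \<and> q \<in> G" if "p \<in> \<Union>C" "q \<in> \<Union>C" for p q
    using that chain unfolding chain_subset_def by blast
  note D = dominated_linear_graphsD[OF subsetD[OF C(1)]]
  show ?thesis
    unfolding dominated_linear_graphs_def single_valued_def
  proof (intro CollectI conjI allI impI)
    show "(y, norm y) \<in> \<Union>C"
      using C D(1) by blast
    show "r = s" if "(x, r) \<in> \<Union>C" "(x, s) \<in> \<Union>C" for x r s
      using in_one[OF that] D(2) by blast
    show "(x + x', r + r') \<in> \<Union>C" if "(x, r) \<in> \<Union>C" "(x', r') \<in> \<Union>C" for x r x' r'
      using in_one[OF that] D(3) by blast
  qed (use D(4,5) in blast)+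
qed

lemma dominated_linear_graphs_span:
  assumes "y \<noteq> 0"
  shows "range (\<lambda>a. (a *\<^sub>R y, a * norm y)) \<in> dominated_linear_graphs y"
  unfolding dominated_linear_graphs_def single_valued_def
proof (intro CollectI conjI allI impI)
  show "(y, norm y) \<in> range (\<lambda>a. (a *\<^sub>R y, a * norm y))"
    by (rule range_eqI[of _ _ 1]) simp
  show "r = s" if "(x, r) \<in> range (\<lambda>a. (a *\<^sub>R y, a * norm y))"
    "(x, s) \<in> range (\<lambda>a. (a *\<^sub>R y, a * norm y))" for x r s
    using that assms by (auto simp: scaleR_cancel_right)
  show "(x + x', r + r') \<in> range (\<lambda>a. (a *\<^sub>R y, a * norm y))"
    if xr: "(x, r) \<in> range (\<lambda>a. (a *\<^sub>R y, a * norm y))"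
      and xr': "(x', r') \<in> range (\<lambda>a. (a *\<^sub>R y, a * norm y))" for x r x' r'
  proof -
    obtain a b where "x = a *\<^sub>R y" "r = a * norm y" "x' = b *\<^sub>R y" "r' = b * norm y"
      using xr xr' by auto
    then show ?thesis
      by (intro range_eqI[of _ _ "a + b"]) (simp add: scaleR_add_left distrib_right)
  qed
  show "(c *\<^sub>R x, c * r) \<in> range (\<lambda>a. (a *\<^sub>R y, a * norm y))"
    if "(x, r) \<in> range (\<lambda>a. (a *\<^sub>R y, a * norm y))" for x r c
    using that by (clarsimp simp: image_iff) (metis mult.assoc scaleR_scaleR)
  show "r \<le> norm x" if "(x, r) \<in> range (\<lambda>a. (a *\<^sub>R y, a * norm y))" for x r
    using that by (auto simp: mult_right_mono)
qed

lemma dominated_extension_value: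
  assumes "M \<in> dominated_linear_graphs y"
  obtains \<alpha> where "\<And>x r. (x, r) \<in> M \<Longrightarrow> r + \<alpha> \<le> norm (x + z)"
    and "\<And>x r. (x, r) \<in> M \<Longrightarrow> r - \<alpha> \<le> norm (x - z)"
proof -
  note D = dominated_linear_graphsD[OF assms]
  have key: "r - norm (x - z) \<le> norm (x' + z) - r'" if "(x, r) \<in> M" "(x', r') \<in> M" for x r x' r'
  proof -
    have "r + r' \<le> norm ((x - z) + (x' + z))"
      using D(5)[OF D(3)[OF that]] by simp
    also have "\<dots> \<le> norm (x - z) + norm (x' + z)"
      by (rule norm_triangle_ineq)
    finally show ?thesis by simp
  qed
  define S where "S = {r - norm (x - z) | x r. (x, r) \<in> M}"
  have zero: "(0, 0) \<in> M"
    using D(4)[OF D(1), of 0] by simp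
  have "S \<noteq> {}" "bdd_above S"
    using zero key[OF _ zero] unfolding S_def bdd_above_def by auto
  show thesis
  proof (rule that[of "Sup S"])
    show "r + Sup S \<le> norm (x + z)" if "(x, r) \<in> M" for x r
      using cSup_least[OF \<open>S \<noteq> {}\<close>, of "norm (x + z) - r"] key[OF _ that] unfolding S_def by force
    show "r - Sup S \<le> norm (x - z)" if "(x, r) \<in> M" for x r
      using cSup_upper[OF _ \<open>bdd_above S\<close>, of "r - norm (x - z)"] that unfolding S_def by force
  qed
qed

lemma dominated_extension_le_norm:
  assumes M: "M \<in> dominated_linear_graphs y" and "(x, r) \<in> M"
    and plus: "\<And>x r. (x, r) \<in> M \<Longrightarrow> r + \<alpha> \<le> norm (x + z)"
    and minus: "\<And>x r. (x, r) \<in> M \<Longrightarrow> r - \<alpha> \<le> norm (x - z)"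
  shows "r + t * \<alpha> \<le> norm (x + t *\<^sub>R z)"
proof -
  note D = dominated_linear_graphsD[OF M]
  have scaled: "(inverse s *\<^sub>R x, inverse s * r) \<in> M" for s
    by (rule D(4)[OF \<open>(x, r) \<in> M\<close>])
  consider "t = 0" | "t > 0" | "t < 0" by linarith
  then show ?thesis
  proof cases
    case 1
    then show ?thesis using D(5)[OF \<open>(x, r) \<in> M\<close>] by simp
  next
    case 2
    have "t * (inverse t * r + \<alpha>) \<le> t * norm (inverse t *\<^sub>R x + z)"
      using 2 by (intro mult_left_mono plus[OF scaled]) simp
    also have "\<dots> = norm (t *\<^sub>R (inverse t *\<^sub>R x + z))"
      using 2 by simp
    finally show ?thesis
      using 2 by (simp add: algebra_simps)
  next
    case 3
    have "- t * (inverse (- t) * r - \<alpha>) \<le> - t * norm (inverse (- t) *\<^sub>R x - z)"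
      using 3 by (intro mult_left_mono minus[OF scaled]) simp
    also have "\<dots> = norm ((- t) *\<^sub>R (inverse (- t) *\<^sub>R x - z))"
      using 3 by simp
    finally show ?thesis
      using 3 by (simp add: algebra_simps)
  qed
qed

lemma dominated_linear_graphs_adjoin:
  assumes M: "M \<in> dominated_linear_graphs y" and z: "z \<notin> Domain M"
    and plus: "\<And>x r. (x, r) \<in> M \<Longrightarrow> r + \<alpha> \<le> norm (x + z)"
    and minus: "\<And>x r. (x, r) \<in> M \<Longrightarrow> r - \<alpha> \<le> norm (x - z)"
  obtains M' where "M' \<in> dominated_linear_graphs y" "M \<subseteq> M'" "(z, \<alpha>) \<in> M'"
proof -
  note D = dominated_linear_graphsD[OF M]
  define M' where "M' = {(x + t *\<^sub>R z, r + t * \<alpha>) | x r t. (x, r) \<in> M}"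
  have M'I: "(x + t *\<^sub>R z, r + t * \<alpha>) \<in> M'" if "(x, r) \<in> M" for x r t
    unfolding M'_def using that by blast
  have "(0, 0) \<in> M"
    using D(4)[OF D(1), of 0] by simp
  from M'I[OF this, of 1] have "(z, \<alpha>) \<in> M'"
    by simp
  moreover have "M \<subseteq> M'"
    using M'I[where t = 0] by auto
  moreover have "M' \<in> dominated_linear_graphs y"
    unfolding dominated_linear_graphs_def single_valued_def
  proof (intro CollectI conjI allI impI)
    show "(y, norm y) \<in> M'"
      using M'I[OF D(1), of 0] by simp
  next
    fix x r s assume "(x, r) \<in> M'" "(x, s) \<in> M'"
    then obtain x1 r1 t1 x2 r2 t2 where e: "x = x1 + t1 *\<^sub>R z" "r = r1 + t1 * \<alpha>" "(x1, r1) \<in> M"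
      "x = x2 + t2 *\<^sub>R z" "s = r2 + t2 * \<alpha>" "(x2, r2) \<in> M"
      unfolding M'_def by blast
    show "r = s"
    proof (cases "t1 = t2")
      case True
      then show ?thesis using e D(2) by simp
    next
      case False
      have "(x1 - x2, r1 - r2) \<in> M"
        using D(3)[OF e(3) D(4)[OF e(6), of "-1"]] by simp
      moreover have "x1 - x2 = (t2 - t1) *\<^sub>R z"
        using e by (simp add: algebra_simps)
      ultimately have "(z, inverse (t2 - t1) * (r1 - r2)) \<in> M"
        using D(4)[of "x1 - x2" "r1 - r2" "inverse (t2 - t1)"] False by simp
      with z show ?thesis by blast
    qed
  next
    fix x r x' r' assume "(x, r) \<in> M'" "(x', r') \<in> M'"
    then obtain x1 r1 t1 x2 r2 t2 where e: "x = x1 + t1 *\<^sub>R z" "r = r1 + t1 * \<alpha>" "(x1, r1) \<in> M"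
      "x' = x2 + t2 *\<^sub>R z" "r' = r2 + t2 * \<alpha>" "(x2, r2) \<in> M"
      unfolding M'_def by blast
    show "(x + x', r + r') \<in> M'"
      using M'I[OF D(3)[OF e(3) e(6)], of "t1 + t2"] e by (simp add: algebra_simps)
  next
    fix x r a assume "(x, r) \<in> M'"
    then obtain x1 r1 t where e: "x = x1 + t *\<^sub>R z" "r = r1 + t * \<alpha>" "(x1, r1) \<in> M"
      unfolding M'_def by blast
    show "(a *\<^sub>R x, a * r) \<in> M'"
      using M'I[OF D(4)[OF e(3)], of a "a * t"] e by (simp add: algebra_simps)
  next
    fix x r assume "(x, r) \<in> M'"
    then show "r \<le> norm x"
      unfolding M'_def using dominated_extension_le_norm[OF M _ plus minus] by blast
  qed
  ultimately show thesis
    using that by blast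
qed

lemma dominated_linear_graphs_extend:
  assumes M: "M \<in> dominated_linear_graphs y" and z: "z \<notin> Domain M"
  shows "\<exists>M'\<in>dominated_linear_graphs y. M \<subset> M'"
proof -
  obtain \<alpha> where "\<And>x r. (x, r) \<in> M \<Longrightarrow> r + \<alpha> \<le> norm (x + z)"
    and "\<And>x r. (x, r) \<in> M \<Longrightarrow> r - \<alpha> \<le> norm (x - z)"
    using dominated_extension_value[OF M] by blast
  then obtain M' where "M' \<in> dominated_linear_graphs y" "M \<subseteq> M'" "(z, \<alpha>) \<in> M'"
    using dominated_linear_graphs_adjoin[OF M z] by blast
  then show ?thesis
    using z by blast
qed

lemma real_hahn_banach:
  fixes y :: "'v::real_normed_vector"
  assumes "y \<noteq> 0"
  shows "\<exists>g. linear g \<and> (\<forall>x. \<bar>g x\<bar> \<le> norm x) \<and> g y = norm y"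
proof -
  have "\<exists>M\<in>dominated_linear_graphs y. \<forall>X\<in>dominated_linear_graphs y. M \<subseteq> X \<longrightarrow> X = M"
  proof (rule Zorn_Lemma2, intro ballI)
    fix C assume "C \<in> chains (dominated_linear_graphs y)"
    then have "C \<subseteq> dominated_linear_graphs y" "chain\<^sub>\<subseteq> C"
      unfolding chains_def by auto
    then show "\<exists>U\<in>dominated_linear_graphs y. \<forall>X\<in>C. X \<subseteq> U"
      using dominated_linear_graphs_Union_chain dominated_linear_graphs_span[OF assms]
      by (cases "C = {}") blast+
  qed
  then obtain M where M: "M \<in> dominated_linear_graphs y"
    and maximal: "\<forall>X\<in>dominated_linear_graphs y. M \<subseteq> X \<longrightarrow> X = M"
    by blast
  note D = dominated_linear_graphsD[OF M]
  have "\<forall>x. \<exists>r. (x, r) \<in> M"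
    using dominated_linear_graphs_extend[OF M] maximal by blast
  then obtain g where gM: "\<And>x. (x, g x) \<in> M"
    by metis
  have g_eq: "g x = r" if "(x, r) \<in> M" for x r
    using D(2)[OF gM that] .
  have "linear g"
    by (rule linearI) (auto intro: g_eq D(3,4) gM)
  moreover have "\<bar>g x\<bar> \<le> norm x" for x
    using D(5)[OF gM, of x] D(5)[OF D(4)[OF gM[of x], of "-1"]] by simp
  ultimately show ?thesis
    using g_eq[OF D(1)] by blast
qed

locale complex_scaling =
  fixes sc :: "complex \<Rightarrow> 'v::real_normed_vector \<Rightarrow> 'v"
  assumes cvs: "cvs sc"
begin

lemma scale_of_real: "sc (complex_of_real r) x = r *\<^sub>R x"
  and scale_add_right: "sc c (x + y) = sc c x + sc c y"
  and scale_add_left: "sc (c + e) x = sc c x + sc e x"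
  and scale_scale: "sc c (sc e x) = sc (c * e) x"
  and norm_scale: "norm (sc c x) = cmod c * norm x"
  using cvs unfolding cvs_def by metis+

lemma scale_one: "sc 1 x = x"
  using scale_of_real[of 1] by simp

lemma scale_zero_left: "sc 0 x = 0"
  using scale_of_real[of 0] by simp

lemma scale_zero_right: "sc c 0 = 0"
  using norm_scale[of c 0] by simp

lemma scale_minus_right: "sc c (- x) = - sc c x"
  using scale_add_right[of c x "- x"] by (simp add: scale_zero_right eq_neg_iff_add_eq_0 add.commute)

lemma scale_diff_right: "sc c (x - y) = sc c x - sc c y"
  using scale_add_right[of c x "- y"] by (simp add: scale_minus_right)

lemma scale_commute: "sc c (sc e x) = sc e (sc c x)"
  by (simp add: scale_scale mult.commute)

lemma scale_scaleR: "sc c (r *\<^sub>R x) = r *\<^sub>R sc c x"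
  by (metis scale_of_real scale_commute)

lemma scale_ii: "sc \<i> (sc \<i> x) = - x"
  using scale_of_real[of "-1" x] by (simp add: scale_scale)

lemma scale_Re_Im: "sc c x = Re c *\<^sub>R x + Im c *\<^sub>R sc \<i> x"
proof -
  have "c = complex_of_real (Re c) + complex_of_real (Im c) * \<i>"
    by (simp add: complex_eq_iff)
  then have "sc c x = sc (complex_of_real (Re c)) x + sc (complex_of_real (Im c)) (sc \<i> x)"
    by (metis scale_add_left scale_scale)
  then show ?thesis
    by (simp add: scale_of_real)
qed

end

definition dual_unit_ball :: "(complex \<Rightarrow> 'v \<Rightarrow> 'v) \<Rightarrow> ('v::real_normed_vector \<Rightarrow> complex) set" where
  "dual_unit_ball sc = {f. (\<forall>x y. f (x + y) = f x + f y) \<and> (\<forall>c x. f (sc c x) = c * f x) \<and>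
     (\<forall>x. cmod (f x) \<le> norm x)}"

context complex_scaling
begin

lemma complex_hahn_banach:
  assumes "y \<noteq> 0"
  shows "\<exists>f\<in>dual_unit_ball sc. f y \<noteq> 0"
proof -
  obtain g where "linear g" and g_le: "\<And>x. \<bar>g x\<bar> \<le> norm x" and "g y = norm y"
    using real_hahn_banach[OF assms] by blast
  note g_add = linear_add[OF \<open>linear g\<close>] and g_scale = linear_scale[OF \<open>linear g\<close>]
  define f where "f x = Complex (g x) (- g (sc \<i> x))" for x
  have f_add: "f (x + x') = f x + f x'" for x x'
    unfolding f_def by (simp add: g_add scale_add_right complex_eq_iff)
  have f_scale: "f (sc c x) = c * f x" for c x
  proof -
    have "g (sc c x) = Re c * g x + Im c * g (sc \<i> x)"
      unfolding scale_Re_Im[of c x] by (simp add: g_add g_scale)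
    moreover have "g (sc \<i> (sc c x)) = Re c * g (sc \<i> x) - Im c * g x"
      unfolding scale_Re_Im[of c x]
      by (simp add: g_add g_scale scale_add_right scale_scaleR scale_ii linear_diff[OF \<open>linear g\<close>])
    ultimately show ?thesis
      unfolding f_def by (simp add: complex_eq_iff algebra_simps)
  qed
  have "cmod (f x) \<le> norm x" for x
  proof (cases "f x = 0")
    case False
    \<comment> \<open>rotate \<open>x\<close> so that \<open>f\<close> becomes real and positive, where it agrees with \<open>g\<close>\<close>
    define \<omega> where "\<omega> = cnj (f x) / complex_of_real (cmod (f x))"
    have "cmod \<omega> = 1"
      unfolding \<omega>_def using False by (simp add: norm_divide)
    have "f (sc \<omega> x) = complex_of_real (cmod (f x))"
      unfolding f_scale \<omega>_def using False complex_norm_square[of "f x"]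
      by (simp add: power2_eq_square field_simps)
    then have "cmod (f x) = g (sc \<omega> x)"
      unfolding f_def by (simp add: complex_eq_iff)
    also have "\<dots> \<le> norm (sc \<omega> x)"
      using g_le abs_le_D1 by blast
    finally show ?thesis
      using \<open>cmod \<omega> = 1\<close> by (simp add: norm_scale)
  qed simp
  moreover have "f y \<noteq> 0"
    using \<open>g y = norm y\<close> assms unfolding f_def by (simp add: complex_eq_iff)
  ultimately show ?thesis
    unfolding dual_unit_ball_def using f_add f_scale by blast
qed

lemma eq_0_if_dual_unit_ball_vanishes:
  assumes "\<And>f. f \<in> dual_unit_ball sc \<Longrightarrow> f y = 0"
  shows "y = 0"
  using complex_hahn_banach assms by blast

end

section \<open>The unitization and its projective tensor square\<close>

definition bounded_ufunctional ::
  "(complex \<Rightarrow> 'a \<Rightarrow> 'a) \<Rightarrow> ('a::real_normed_algebra \<times> complex \<Rightarrow> complex) \<Rightarrow> bool" where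
  "bounded_ufunctional sc L \<longleftrightarrow>
     (\<forall>u v. L (uadd u v) = L u + L v) \<and> (\<forall>c u. L (uscale sc c u) = c * L u) \<and>
     (\<exists>K. \<forall>u. cmod (L u) \<le> K * unorm u)"

definition bounded_cbilinear ::
  "(complex \<Rightarrow> 'a \<Rightarrow> 'a) \<Rightarrow> ('a::real_normed_algebra \<times> complex \<Rightarrow> 'a \<times> complex \<Rightarrow> complex) \<Rightarrow> bool" where
  "bounded_cbilinear sc \<phi> \<longleftrightarrow> cbilinear sc \<phi> \<and> (\<exists>K. \<forall>u v. cmod (\<phi> u v) \<le> K * (unorm u * unorm v))"

lemma unorm_nonneg: "0 \<le> unorm u"
  unfolding unorm_def by simp

lemma norm_fst_le_unorm: "norm (fst w) \<le> unorm w"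
  and norm_snd_le_unorm: "cmod (snd w) \<le> unorm w"
  unfolding unorm_def by simp_all

lemma abs_unorm [simp]: "\<bar>unorm u\<bar> = unorm u"
  using unorm_nonneg[of u] by simp

lemma bounded_ufunctionalD:
  assumes "bounded_ufunctional sc L"
  shows "L (uadd u v) = L u + L v" and "L (uscale sc c u) = c * L u"
  using assms unfolding bounded_ufunctional_def by blast+

lemma bounded_cbilinearI:
  assumes "\<And>u v w. \<phi> (uadd u v) w = \<phi> u w + \<phi> v w"
    and "\<And>u v w. \<phi> u (uadd v w) = \<phi> u v + \<phi> u w"
    and "\<And>c u v. \<phi> (uscale sc c u) v = c * \<phi> u v"
    and "\<And>c u v. \<phi> u (uscale sc c v) = c * \<phi> u v"
    and "\<And>u v. cmod (\<phi> u v) \<le> K * (unorm u * unorm v)"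
  shows "bounded_cbilinear sc \<phi>"
  unfolding bounded_cbilinear_def cbilinear_def using assms by blast

lemma bounded_cbilinearD:
  assumes "bounded_cbilinear sc \<phi>"
  shows "\<phi> (uadd u v) w = \<phi> u w + \<phi> v w"
    and "\<phi> u (uadd v w) = \<phi> u v + \<phi> u w"
    and "\<phi> (uscale sc c u) v = c * \<phi> u v"
    and "\<phi> u (uscale sc c v) = c * \<phi> u v"
  using assms unfolding bounded_cbilinear_def cbilinear_def by blast+

lemma bounded_cbilinear_pos_bound:
  assumes "bounded_cbilinear sc \<phi>"
  obtains K where "K > 0" "\<And>u v. cmod (\<phi> u v) \<le> K * (unorm u * unorm v)"
proof -
  obtain K where K: "\<And>u v. cmod (\<phi> u v) \<le> K * (unorm u * unorm v)"
    using assms unfolding bounded_cbilinear_def by blast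
  have "K * (unorm u * unorm v) \<le> max K 1 * (unorm u * unorm v)" for u v
    by (intro mult_right_mono) (simp_all add: unorm_nonneg)
  with K have "cmod (\<phi> u v) \<le> max K 1 * (unorm u * unorm v)" for u v
    by (meson order_trans)
  then show thesis
    by (intro that[of "max K 1"]) auto
qed

lemma bounded_cbilinear_swap:
  assumes "bounded_cbilinear sc \<phi>"
  shows "bounded_cbilinear sc (\<lambda>u v. \<phi> v u)"
proof -
  obtain K where "\<And>u v. cmod (\<phi> u v) \<le> K * (unorm u * unorm v)"
    using assms unfolding bounded_cbilinear_def by blast
  then have "cmod (\<phi> v u) \<le> K * (unorm u * unorm v)" for u v
    by (metis mult.commute)
  then show ?thesis
    by (rule bounded_cbilinearI[rotated 4]) (simp_all add: bounded_cbilinearD[OF assms])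
qed

lemma summable_pair:
  assumes "bounded_cbilinear sc \<phi>" and "ptensor r"
  shows "summable (\<lambda>n. \<phi> (fst (r n)) (snd (r n)))"
proof -
  obtain K where K: "\<And>u v. cmod (\<phi> u v) \<le> K * (unorm u * unorm v)"
    using assms(1) unfolding bounded_cbilinear_def by blast
  have "summable (\<lambda>n. K * (unorm (fst (r n)) * unorm (snd (r n))))"
    using assms(2) unfolding ptensor_def by (rule summable_mult)
  then show ?thesis
    by (rule summable_comparison_test') (rule K)
qed

lemma norm_pair_le:
  assumes "\<chi> \<in> pball sc" and r: "ptensor r"
  shows "cmod (pair \<chi> r) \<le> (\<Sum>n. unorm (fst (r n)) * unorm (snd (r n)))"
proof -
  have bound: "cmod (\<chi> u v) \<le> unorm u * unorm v" for u v
    using assms(1) unfolding pball_def by blast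
  have summable: "summable (\<lambda>n. unorm (fst (r n)) * unorm (snd (r n)))"
    using r unfolding ptensor_def .
  then have summable_cmod: "summable (\<lambda>n. cmod (\<chi> (fst (r n)) (snd (r n))))"
    by (rule summable_comparison_test') (simp add: bound)
  have "cmod (pair \<chi> r) \<le> (\<Sum>n. cmod (\<chi> (fst (r n)) (snd (r n))))"
    unfolding pair_def using summable_cmod by (rule summable_norm)
  also have "\<dots> \<le> (\<Sum>n. unorm (fst (r n)) * unorm (snd (r n)))"
    using summable_cmod summable by (rule suminf_le[OF bound])
  finally show ?thesis .
qed

lemma pair_le_pdist:
  assumes "bounded_cbilinear sc \<phi>"
  obtains K where "\<And>r s. ptensor r \<Longrightarrow> ptensor s \<Longrightarrow> cmod (pair \<phi> r - pair \<phi> s) \<le> K * pdist sc r s"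
proof -
  obtain K where "K > 0" and K: "\<And>u v. cmod (\<phi> u v) \<le> K * (unorm u * unorm v)"
    using bounded_cbilinear_pos_bound[OF assms] by blast
  define \<psi> where "\<psi> u v = \<phi> u v / complex_of_real K" for u v
  have "\<psi> \<in> pball sc"
    unfolding pball_def
  proof (intro CollectI conjI allI)
    show "cbilinear sc \<psi>"
      using assms unfolding bounded_cbilinear_def cbilinear_def \<psi>_def by (simp add: add_divide_distrib)
    show "cmod (\<psi> u v) \<le> unorm u * unorm v" for u v
      using K[of u v] \<open>K > 0\<close> unfolding \<psi>_def by (simp add: norm_divide divide_le_eq mult.commute)
  qed
  have pair_\<psi>: "pair \<psi> r = pair \<phi> r / complex_of_real K" if "ptensor r" for r
    unfolding pair_def \<psi>_def by (rule suminf_divide[OF summable_pair[OF assms that]])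
  have "cmod (pair \<phi> r - pair \<phi> s) \<le> K * pdist sc r s" if r: "ptensor r" and s: "ptensor s" for r s
  proof -
    have "bdd_above ((\<lambda>\<chi>. cmod (pair \<chi> r - pair \<chi> s)) ` pball sc)"
    proof (rule bdd_aboveI2)
      fix \<chi> assume "\<chi> \<in> pball sc"
      then show "cmod (pair \<chi> r - pair \<chi> s)
          \<le> (\<Sum>n. unorm (fst (r n)) * unorm (snd (r n))) + (\<Sum>n. unorm (fst (s n)) * unorm (snd (s n)))"
        by (intro order_trans[OF norm_triangle_ineq4] add_mono norm_pair_le r s)
    qed
    then have "cmod (pair \<psi> r - pair \<psi> s) \<le> pdist sc r s"
      unfolding pdist_def by (rule cSUP_upper[OF \<open>\<psi> \<in> pball sc\<close>])
    then show ?thesis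
      using \<open>K > 0\<close> by (simp add: pair_\<psi> r s diff_divide_distrib[symmetric] norm_divide divide_le_eq mult.commute)
  qed
  then show thesis by (rule that)
qed

lemma ptensor_flip: "ptensor r \<Longrightarrow> ptensor (flip r)"
  unfolding ptensor_def flip_def by (simp add: mult.commute)

locale complex_banach_algebra =
  fixes sc :: "complex \<Rightarrow> 'a::{real_normed_algebra,banach} \<Rightarrow> 'a"
  assumes cbanach_algebra: "cbanach_algebra sc"
begin

sublocale complex_scaling sc
  using cbanach_algebra unfolding cbanach_algebra_def by unfold_locales blast

lemma scale_mult_left: "sc c x * y = sc c (x * y)"
  and scale_mult_right: "x * sc c y = sc c (x * y)"
  using cbanach_algebra unfolding cbanach_algebra_def by metis+

lemma umult_uadd_left: "umult sc (uadd u v) w = uadd (umult sc u w) (umult sc v w)"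
  by (simp add: umult_def uadd_def scale_add_left scale_add_right algebra_simps)

lemma umult_uadd_right: "umult sc w (uadd u v) = uadd (umult sc w u) (umult sc w v)"
  by (simp add: umult_def uadd_def scale_add_left scale_add_right algebra_simps)

lemma umult_uscale_left: "umult sc (uscale sc c u) v = uscale sc c (umult sc u v)"
  by (simp add: umult_def uscale_def scale_add_right scale_scale scale_mult_left mult.commute)

lemma umult_uscale_right: "umult sc u (uscale sc c v) = uscale sc c (umult sc u v)"
  by (simp add: umult_def uscale_def scale_add_right scale_scale scale_mult_right mult.commute)

lemma umult_unit_right: "umult sc w (0, 1) = w"
  by (simp add: umult_def scale_one scale_zero_right)

lemma unorm_umult: "unorm (umult sc u v) \<le> unorm u * unorm v"
proof -
  obtain p l q m where uv: "u = (p, l)" "v = (q, m)"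
    by (cases u, cases v)
  have "norm (p * q + sc l q + sc m p) \<le> norm (p * q) + norm (sc l q) + norm (sc m p)"
    by (meson norm_triangle_le norm_triangle_ineq add_mono order_refl)
  also have "\<dots> \<le> norm p * norm q + cmod l * norm q + cmod m * norm p"
    by (simp add: norm_mult_ineq norm_scale)
  finally show ?thesis
    unfolding uv unorm_def umult_def by (simp add: norm_mult algebra_simps)
qed

lemma ptensor_lact: "ptensor r \<Longrightarrow> ptensor (lact sc u r)"
  unfolding ptensor_def lact_def
proof (rule summable_comparison_test'[OF summable_mult[of _ "unorm u"]])
  show "norm (unorm (fst (umult sc u (fst (r n)), snd (r n))) * unorm (snd (umult sc u (fst (r n)), snd (r n))))
      \<le> unorm u * (unorm (fst (r n)) * unorm (snd (r n)))" for n
    using mult_right_mono[OF unorm_umult unorm_nonneg] by (simp add: abs_mult mult.assoc)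
qed

lemma ptensor_ract: "ptensor r \<Longrightarrow> ptensor (ract sc r u)"
  unfolding ptensor_def ract_def
proof (rule summable_comparison_test'[OF summable_mult[of _ "unorm u"]])
  show "norm (unorm (fst (fst (r n), umult sc (snd (r n)) u)) * unorm (snd (fst (r n), umult sc (snd (r n)) u)))
      \<le> unorm u * (unorm (fst (r n)) * unorm (snd (r n)))" for n
    using mult_left_mono[OF unorm_umult unorm_nonneg, of "fst (r n)" "snd (r n)" u]
    by (simp add: abs_mult algebra_simps)
qed

lemma bounded_cbilinear_umult:
  assumes "bounded_ufunctional sc L"
  shows "bounded_cbilinear sc (\<lambda>u v. L (umult sc u v))"
proof -
  obtain K where K: "\<And>u. cmod (L u) \<le> K * unorm u"
    using assms unfolding bounded_ufunctional_def by blast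
  have "cmod (L (umult sc u v)) \<le> max K 0 * (unorm u * unorm v)" for u v
  proof -
    have "cmod (L (umult sc u v)) \<le> max K 0 * unorm (umult sc u v)"
      using K[of "umult sc u v"] mult_right_mono[OF max.cobounded1 unorm_nonneg] by (rule order_trans)
    also have "\<dots> \<le> max K 0 * (unorm u * unorm v)"
      by (intro mult_left_mono unorm_umult) simp
    finally show ?thesis .
  qed
  then show ?thesis
    by (rule bounded_cbilinearI[rotated 4])
      (simp_all add: umult_uadd_left umult_uadd_right umult_uscale_left umult_uscale_right
        bounded_ufunctionalD[OF assms])
qed

lemma bounded_cbilinear_umult_left:
  assumes "bounded_cbilinear sc \<phi>"
  shows "bounded_cbilinear sc (\<lambda>u v. \<phi> (umult sc u C) v)"
proof -
  obtain K where "K > 0" and K: "\<And>u v. cmod (\<phi> u v) \<le> K * (unorm u * unorm v)"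
    using bounded_cbilinear_pos_bound[OF assms] by blast
  have "cmod (\<phi> (umult sc u C) v) \<le> (K * unorm C) * (unorm u * unorm v)" for u v
  proof -
    have "cmod (\<phi> (umult sc u C) v) \<le> K * (unorm (umult sc u C) * unorm v)"
      by (rule K)
    also have "\<dots> \<le> K * ((unorm u * unorm C) * unorm v)"
      using \<open>K > 0\<close> by (intro mult_left_mono mult_right_mono unorm_umult unorm_nonneg) simp
    finally show ?thesis
      by (simp add: algebra_simps)
  qed
  then show ?thesis
    by (rule bounded_cbilinearI[rotated 4])
      (simp_all add: umult_uadd_left umult_uscale_left bounded_cbilinearD[OF assms])
qed

lemma bounded_ufunctional_split:
  assumes "bounded_ufunctional sc L"
  shows "bounded_linear (\<lambda>x. L (x, 0))"
    and "L w = L (fst w, 0) + snd w * L (0, 1)"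
proof -
  note add = bounded_ufunctionalD(1)[OF assms] and scale = bounded_ufunctionalD(2)[OF assms]
  obtain K where K: "\<And>u. cmod (L u) \<le> K * unorm u"
    using assms unfolding bounded_ufunctional_def by blast
  show "bounded_linear (\<lambda>x. L (x, 0))"
  proof (rule bounded_linear_intro[where K = K])
    show "L (x + y, 0) = L (x, 0) + L (y, 0)" for x y
      using add[of "(x, 0)" "(y, 0)"] by (simp add: uadd_def)
    show "L (r *\<^sub>R x, 0) = r *\<^sub>R L (x, 0)" for r x
      using scale[of "complex_of_real r" "(x, 0)"] by (simp add: uscale_def scale_of_real scaleR_conv_of_real)
    show "norm (L (x, 0)) \<le> norm x * K" for x
      using K[of "(x, 0)"] by (simp add: unorm_def mult.commute)
  qed
  have "w = uadd (fst w, 0) (uscale sc (snd w) (0, 1))"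
    by (simp add: uadd_def uscale_def scale_zero_right)
  then show "L w = L (fst w, 0) + snd w * L (0, 1)"
    by (metis add scale)
qed

lemma pair_umult:
  assumes L: "bounded_ufunctional sc L" and r: "ptensor r"
  shows "pair (\<lambda>u v. L (umult sc u v)) r = L (ppi sc r)"
proof -
  define G where "G x = L (x, 0)" for x
  have G: "bounded_linear G"
    unfolding G_def by (rule bounded_ufunctional_split(1)[OF L])
  define w where "w n = umult sc (fst (r n)) (snd (r n))" for n
  have "summable (\<lambda>n. unorm (w n))"
    by (intro summable_comparison_test'[OF r[unfolded ptensor_def]]) (simp add: w_def unorm_umult)
  then have "summable (\<lambda>n. norm (fst (w n)))" "summable (\<lambda>n. norm (snd (w n)))"
    by (auto intro: summable_comparison_test' simp: unorm_def)
  then have s1: "summable (\<lambda>n. fst (w n))" and s2: "summable (\<lambda>n. snd (w n))"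
    by (auto intro: summable_norm_cancel)
  have "pair (\<lambda>u v. L (umult sc u v)) r = (\<Sum>n. G (fst (w n)) + snd (w n) * L (0, 1))"
    unfolding pair_def w_def G_def by (subst bounded_ufunctional_split(2)[OF L]) (rule refl)
  also have "\<dots> = G (\<Sum>n. fst (w n)) + (\<Sum>n. snd (w n)) * L (0, 1)"
    by (simp add: suminf_add[symmetric] summable_mult2 s2 bounded_linear.summable[OF G s1]
        bounded_linear.suminf[OF G s1] suminf_mult2[OF s2])
  also have "\<dots> = L (ppi sc r)"
    unfolding G_def ppi_def w_def by (subst (2) bounded_ufunctional_split(2)[OF L]) simp
  finally show ?thesis .
qed

end

section \<open>Symmetric approximate diagonals\<close>

lemma add_self_eq_add_self_iff: "x + x = y + y \<longleftrightarrow> x = (y::'v::real_vector)"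
  by (metis scaleR_2 scaleR_cancel_left zero_neq_numeral)

locale sym_approx_diagonal = complex_banach_algebra sc
  for sc :: "complex \<Rightarrow> 'a::{real_normed_algebra,banach} \<Rightarrow> 'a" +
  fixes F :: "'i filter" and t :: "'i \<Rightarrow> 'a tens"
  assumes sym_approx_diag: "sym_approx_diag sc F t"
begin

lemma nontrivial: "F \<noteq> bot"
  using sym_approx_diag unfolding sym_approx_diag_def by blast

lemma eventually_ptensor: "\<forall>\<^sub>F i in F. ptensor (t i)"
  using sym_approx_diag unfolding sym_approx_diag_def by (auto elim: eventually_mono)

lemma eventually_pair_flip:
  assumes "bounded_cbilinear sc \<phi>"
  shows "\<forall>\<^sub>F i in F. pair \<phi> (flip (t i)) = pair \<phi> (t i)"
proof -
  obtain K where K: "\<And>r s. ptensor r \<Longrightarrow> ptensor s \<Longrightarrow> cmod (pair \<phi> r - pair \<phi> s) \<le> K * pdist sc r s"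
    using pair_le_pdist[OF assms] by blast
  have "\<forall>\<^sub>F i in F. ptensor (t i) \<and> pdist sc (flip (t i)) (t i) = 0"
    using sym_approx_diag unfolding sym_approx_diag_def by blast
  then show ?thesis
    by (rule eventually_mono) (use K ptensor_flip in force)
qed

lemma pair_lact_ract_tendsto:
  assumes "bounded_cbilinear sc \<phi>"
  shows "((\<lambda>i. pair \<phi> (lact sc u (t i)) - pair \<phi> (ract sc (t i) u)) \<longlongrightarrow> 0) F"
proof -
  obtain K where K: "\<And>r s. ptensor r \<Longrightarrow> ptensor s \<Longrightarrow> cmod (pair \<phi> r - pair \<phi> s) \<le> K * pdist sc r s"
    using pair_le_pdist[OF assms] by blast
  have "((\<lambda>i. pdist sc (lact sc u (t i)) (ract sc (t i) u)) \<longlongrightarrow> 0) F"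
    using sym_approx_diag unfolding sym_approx_diag_def by blast
  then show ?thesis
  proof (rule tendsto_0_le[where K = "\<bar>K\<bar>"])
    show "\<forall>\<^sub>F i in F. norm (pair \<phi> (lact sc u (t i)) - pair \<phi> (ract sc (t i) u))
        \<le> norm (pdist sc (lact sc u (t i)) (ract sc (t i) u)) * \<bar>K\<bar>"
      using eventually_ptensor
    proof (rule eventually_mono)
      fix i assume "ptensor (t i)"
      then have "cmod (pair \<phi> (lact sc u (t i)) - pair \<phi> (ract sc (t i) u))
          \<le> K * pdist sc (lact sc u (t i)) (ract sc (t i) u)"
        by (intro K ptensor_lact ptensor_ract)
      also have "\<dots> \<le> norm (pdist sc (lact sc u (t i)) (ract sc (t i) u)) * \<bar>K\<bar>"
        using abs_ge_self[of "K * pdist sc (lact sc u (t i)) (ract sc (t i) u)"]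
        by (simp add: abs_mult mult.commute)
      finally show "norm (pair \<phi> (lact sc u (t i)) - pair \<phi> (ract sc (t i) u))
          \<le> norm (pdist sc (lact sc u (t i)) (ract sc (t i) u)) * \<bar>K\<bar>" .
    qed
  qed
qed

lemma ppi_tendsto: "((\<lambda>i. fst (ppi sc (t i))) \<longlongrightarrow> 0) F" "((\<lambda>i. snd (ppi sc (t i))) \<longlongrightarrow> 1) F"
proof -
  have approx_unit: "\<forall>u. ((\<lambda>i. unorm (usub (umult sc (ppi sc (t i)) u) u)) \<longlongrightarrow> 0) F"
    using sym_approx_diag unfolding sym_approx_diag_def by blast
  have lim: "((\<lambda>i. unorm (usub (ppi sc (t i)) (0, 1))) \<longlongrightarrow> 0) F"
    using approx_unit[rule_format, of "(0, 1)"] by (simp only: umult_unit_right)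
  have bounds: "norm (fst w) \<le> norm (unorm (usub w (0, 1))) * 1"
    "norm (snd w - 1) \<le> norm (unorm (usub w (0, 1))) * 1" for w :: "'a \<times> complex"
    by (simp_all add: unorm_def usub_def)
  show "((\<lambda>i. fst (ppi sc (t i))) \<longlongrightarrow> 0) F"
    by (intro tendsto_0_le[OF lim always_eventually, where K = 1] allI bounds(1))
  have "((\<lambda>i. snd (ppi sc (t i)) - 1) \<longlongrightarrow> 0) F"
    by (intro tendsto_0_le[OF lim always_eventually, where K = 1] allI bounds(2))
  then show "((\<lambda>i. snd (ppi sc (t i))) \<longlongrightarrow> 1) F"
    by (simp only: LIM_zero_iff)
qed

lemma pair_umult_tendsto:
  assumes L: "bounded_ufunctional sc L"
  shows "((\<lambda>i. pair (\<lambda>u v. L (umult sc u v)) (t i)) \<longlongrightarrow> L (0, 1)) F"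
proof -
  note G = bounded_ufunctional_split(1)[OF L]
  have "((\<lambda>i. L (fst (ppi sc (t i)), 0) + snd (ppi sc (t i)) * L (0, 1)) \<longlongrightarrow> L (0, 0) + 1 * L (0, 1)) F"
    by (rule tendsto_add[OF bounded_linear.tendsto[OF G ppi_tendsto(1)]
          tendsto_mult[OF ppi_tendsto(2) tendsto_const]])
  moreover have "L (0, 0) = 0"
    using linear_0[OF bounded_linear.linear[OF G]] .
  moreover have "L (ppi sc (t i)) = L (fst (ppi sc (t i)), 0) + snd (ppi sc (t i)) * L (0, 1)" for i
    by (rule bounded_ufunctional_split(2)[OF L])
  ultimately have "((\<lambda>i. L (ppi sc (t i))) \<longlongrightarrow> L (0, 1)) F"
    by (simp only: add_0 mult_1)
  moreover have "\<forall>\<^sub>F i in F. pair (\<lambda>u v. L (umult sc u v)) (t i) = L (ppi sc (t i))"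
    using eventually_ptensor by (rule eventually_mono) (rule pair_umult[OF L])
  ultimately show ?thesis
    by (simp only: tendsto_cong)
qed

lemma functional_unit_eq_0:
  assumes L: "bounded_ufunctional sc L"
    and \<phi>: "bounded_cbilinear sc \<phi>" and \<psi>: "bounded_cbilinear sc \<psi>"
    and symmetric_part: "\<And>u v. \<phi> u v + \<phi> v u = L (umult sc u v) + L (umult sc v u)"
    and transpose: "\<And>u v. \<phi> v u = \<psi> u (umult sc v a) - \<psi> (umult sc a u) v"
  shows "L (0, 1) = 0"
proof -
  define \<kappa> where "\<kappa> u v = L (umult sc u v)" for u v
  have \<kappa>: "bounded_cbilinear sc \<kappa>"
    unfolding \<kappa>_def by (rule bounded_cbilinear_umult[OF L])
  have symmetric_pair: "pair \<phi> r + pair \<phi> (flip r) = pair \<kappa> r + pair \<kappa> (flip r)" if "ptensor r" for r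
    using summable_pair[OF \<phi> that] summable_pair[OF bounded_cbilinear_swap[OF \<phi>] that]
      summable_pair[OF \<kappa> that] summable_pair[OF bounded_cbilinear_swap[OF \<kappa>] that]
    unfolding pair_def flip_def \<kappa>_def by (simp add: suminf_add symmetric_part)
  have "\<forall>\<^sub>F i in F. pair \<phi> (t i) = pair \<kappa> (t i)"
    using eventually_ptensor eventually_pair_flip[OF \<phi>] eventually_pair_flip[OF \<kappa>]
    by eventually_elim (metis symmetric_pair add_self_eq_add_self_iff)
  then have lim_unit: "((\<lambda>i. pair \<phi> (t i)) \<longlongrightarrow> L (0, 1)) F"
    using pair_umult_tendsto[OF L] unfolding \<kappa>_def[symmetric] by (simp only: tendsto_cong)
  have transpose_pair: "pair \<phi> (flip r) = pair \<psi> (ract sc r a) - pair \<psi> (lact sc a r)"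
    if "ptensor r" for r
    using summable_pair[OF \<psi> ptensor_ract[OF that]] summable_pair[OF \<psi> ptensor_lact[OF that]]
    unfolding pair_def flip_def lact_def ract_def by (simp add: suminf_diff transpose)
  have "\<forall>\<^sub>F i in F. pair \<phi> (t i) = - (pair \<psi> (lact sc a (t i)) - pair \<psi> (ract sc (t i) a))"
    using eventually_ptensor eventually_pair_flip[OF \<phi>] by eventually_elim (simp add: transpose_pair)
  then have lim_0: "((\<lambda>i. pair \<phi> (t i)) \<longlongrightarrow> 0) F"
    using tendsto_minus[OF pair_lact_ract_tendsto[OF \<psi>, of a]] by (simp add: tendsto_cong)
  show ?thesis
    using tendsto_unique[OF nontrivial lim_unit lim_0] .
qed

end

section \<open>Jordan derivations into symmetric bimodules\<close>

locale jordan_into_symmetric_bimodule =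
  fixes lm :: "'a::real_normed_algebra \<Rightarrow> 'x::real_normed_vector \<Rightarrow> 'x"
    and rm :: "'x \<Rightarrow> 'a \<Rightarrow> 'x" and d :: "'a \<Rightarrow> 'x"
  assumes lm_add_left: "lm (a + b) x = lm a x + lm b x"
    and lm_add_right: "lm a (x + y) = lm a x + lm a y"
    and lm_mult: "lm (a * b) x = lm a (lm b x)"
    and rm_lm: "rm (lm a x) b = lm a (rm x b)"
    and symmetric: "symmetric_bimodule lm rm"
    and d_add: "d (a + b) = d a + d b"
    and jordan: "jordan_derivation lm rm d"
begin

lemma rm_eq_lm: "rm x a = lm a x"
  using symmetric unfolding symmetric_bimodule_def by metis

lemma lm_commute: "lm a (lm b x) = lm b (lm a x)"
  using rm_lm[of a x b] by (simp add: rm_eq_lm)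

lemma lm_zero_left: "lm 0 x = 0"
  using lm_add_left[of 0 0 x] by simp

lemma lm_zero_right: "lm a 0 = 0"
  using lm_add_right[of a 0 0] by simp

lemma d_zero: "d 0 = 0"
  using d_add[of 0 0] by simp

lemma d_minus: "d (- a) = - d a"
  using d_add[of a "- a"] by (simp add: d_zero eq_neg_iff_add_eq_0 add.commute)

lemma d_diff: "d (a - b) = d a - d b"
  using d_add[of a "- b"] by (simp add: d_minus)

lemmas lm_simps = lm_add_left lm_add_right lm_mult lm_zero_left lm_zero_right

lemmas d_simps = d_add d_zero d_minus d_diff

lemma jordan_symmetric: "d (a * b + b * a) = lm a (d b) + lm a (d b) + lm b (d a) + lm b (d a)"
  using jordan unfolding jordan_derivation_def by (simp add: rm_eq_lm algebra_simps)

lemma jordan_triple: "d (q * c * p + p * c * q) = lm (p * q + q * p) (d c) + lm c (d (p * q + q * p))"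
proof -
  define J where "J u v = u * v + v * u" for u v :: 'a
  have dJ: "d (J u v) = lm u (d v) + lm u (d v) + lm v (d u) + lm v (d u)" for u v
    unfolding J_def by (rule jordan_symmetric)
  have lJ: "lm (J u v) x = lm u (lm v x) + lm u (lm v x)" for u v x
    unfolding J_def by (simp add: lm_simps lm_commute)
  \<comment> \<open>\<open>2(qcp + pcq) = J(J(q,c),p) + J(J(p,c),q) - J(J(q,p),c)\<close>\<close>
  have "(q * c * p + p * c * q) + (q * c * p + p * c * q) = J (J q c) p + J (J p c) q - J (J q p) c"
    unfolding J_def by (simp add: algebra_simps)
  then have "d (q * c * p + p * c * q) + d (q * c * p + p * c * q)
      = d (J (J q c) p) + d (J (J p c) q) - d (J (J q p) c)"
    by (metis d_add d_diff)
  also have "\<dots> = (lm (p * q + q * p) (d c) + lm c (d (p * q + q * p))) +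
                   (lm (p * q + q * p) (d c) + lm c (d (p * q + q * p)))"
    unfolding dJ lJ using jordan_symmetric[of p q] unfolding J_def[symmetric]
    by (simp add: lm_simps lm_commute dJ lJ algebra_simps)
  finally show ?thesis
    by (simp only: add_self_eq_add_self_iff)
qed

lemma derivation_if_commutators_in_kernel:
  assumes "\<And>a b. d (a * b - b * a) = 0"
  shows "derivation lm rm d"
  unfolding derivation_def
proof (intro allI)
  fix a b
  have "d (a * b) = d (b * a)"
    using assms[of a b] by (simp add: d_diff)
  then have "d (a * b) + d (a * b) = (rm (d a) b + lm a (d b)) + (rm (d a) b + lm a (d b))"
    using jordan_symmetric[of a b] by (simp add: d_add rm_eq_lm algebra_simps)
  then show "d (a * b) = rm (d a) b + lm a (d b)"
    by (simp only: add_self_eq_add_self_iff)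
qed

end

section \<open>Bounded Jordan derivations annihilate commutators\<close>

lemma bounded_ufunctional_dual_comp:
  assumes f: "f \<in> dual_unit_ball scX"
    and add: "\<And>u v. \<Phi> (uadd u v) = \<Phi> u + \<Phi> v"
    and scale: "\<And>c u. \<Phi> (uscale sc c u) = scX c (\<Phi> u)"
    and bound: "\<And>u. norm (\<Phi> u) \<le> K * unorm u"
  shows "bounded_ufunctional sc (\<lambda>u. f (\<Phi> u))"
proof -
  have "cmod (f (\<Phi> u)) \<le> K * unorm u" for u
    using f bound[of u] unfolding dual_unit_ball_def by (blast intro: order_trans)
  moreover have "f (\<Phi> (uadd u v)) = f (\<Phi> u) + f (\<Phi> v)" "f (\<Phi> (uscale sc c u)) = c * f (\<Phi> u)" for u v c
    using f unfolding dual_unit_ball_def by (simp_all add: add scale)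
  ultimately show ?thesis
    unfolding bounded_ufunctional_def by blast
qed

lemma (in complex_banach_algebra) fst_umult_commutator:
  "fst (umult sc (umult sc (umult sc v (a, 0)) (b, 0)) u) - fst (umult sc (umult sc v (b, 0)) (umult sc (a, 0) u))
     = fst (umult sc (umult sc v (a * b - b * a, 0)) u)"
  by (cases u, cases v)
    (simp add: umult_def scale_zero_left scale_zero_right scale_add_right scale_diff_right
      scale_mult_left scale_mult_right algebra_simps)

locale bounded_jordan_into_symmetric_bimodule = complex_banach_algebra sc
  for sc :: "complex \<Rightarrow> 'a::{real_normed_algebra,banach} \<Rightarrow> 'a" +
  fixes scX :: "complex \<Rightarrow> 'x::banach \<Rightarrow> 'x"
    and lm :: "'a \<Rightarrow> 'x \<Rightarrow> 'x" and rm :: "'x \<Rightarrow> 'a \<Rightarrow> 'x" and d :: "'a \<Rightarrow> 'x"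
  assumes bimodule: "banach_bimodule sc scX lm rm"
    and symmetric: "symmetric_bimodule lm rm"
    and clinear: "clinear_map sc scX d"
    and bounded: "bounded_map d"
    and jordan: "jordan_derivation lm rm d"
begin

sublocale X: complex_scaling scX
  using bimodule unfolding banach_bimodule_def by unfold_locales blast

sublocale jordan_into_symmetric_bimodule lm rm d
  using bimodule symmetric clinear jordan
  unfolding banach_bimodule_def clinear_map_def by unfold_locales simp_all

lemma lm_scale_left: "lm (sc c a) x = scX c (lm a x)"
  and lm_scale_right: "lm a (scX c x) = scX c (lm a x)"
  and norm_lm: "norm (lm a x) \<le> norm a * norm x"
  using bimodule unfolding banach_bimodule_def by simp_all

lemma d_scale: "d (sc c a) = scX c (d a)"
  using clinear unfolding clinear_map_def by blast

lemma d_bound: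
  obtains K where "K \<ge> 0" "\<And>a. norm (d a) \<le> K * norm a"
proof -
  obtain K where K: "\<And>a. norm (d a) \<le> K * norm a"
    using bounded unfolding bounded_map_def by blast
  have "K * norm a \<le> max K 0 * norm a" for a
    by (intro mult_right_mono) auto
  with K show thesis
    by (intro that[of "max K 0"]) (auto intro: order_trans)
qed

lemma jordan_triple_unitization:
  "d (fst (umult sc (umult sc u (c, 0)) v)) + d (fst (umult sc (umult sc v (c, 0)) u))
     = (lm (fst (umult sc u v)) (d c) + scX (snd (umult sc u v)) (d c) + lm c (d (fst (umult sc u v))))
     + (lm (fst (umult sc v u)) (d c) + scX (snd (umult sc v u)) (d c) + lm c (d (fst (umult sc v u))))"
proof -
  obtain p l q m where uv: "u = (p, l)" "v = (q, m)"
    by (cases u, cases v)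
  have triple: "d (p * (c * q)) + d (q * (c * p)) = lm (p * q + q * p) (d c) + lm c (d (p * q + q * p))"
    using jordan_triple[of q c p] by (simp add: d_add mult.assoc add.commute)
  have "d (fst (umult sc (umult sc u (c, 0)) v)) + d (fst (umult sc (umult sc v (c, 0)) u))
      = (d (p * (c * q)) + d (q * (c * p))) + scX l (d (c * q + q * c)) + scX m (d (c * p + p * c))
        + scX (l * m) (d c) + scX (m * l) (d c)"
    unfolding uv umult_def
    by (simp add: d_simps d_scale distrib_right scale_mult_left scale_zero_left scale_zero_right
        scale_add_right X.scale_add_right X.scale_scale mult.assoc algebra_simps)
  also have "\<dots> = (lm (fst (umult sc u v)) (d c) + scX (snd (umult sc u v)) (d c) + lm c (d (fst (umult sc u v))))
     + (lm (fst (umult sc v u)) (d c) + scX (snd (umult sc v u)) (d c) + lm c (d (fst (umult sc v u))))"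
    unfolding triple jordan_symmetric[of c q] jordan_symmetric[of c p] uv umult_def
    by (simp add: d_simps d_scale lm_simps lm_scale_left lm_scale_right X.scale_add_right algebra_simps)
  finally show ?thesis .
qed

lemma bounded_ufunctional_dual_d:
  assumes f: "f \<in> dual_unit_ball scX"
  shows "bounded_ufunctional sc (\<lambda>w. f (d (fst w)))"
proof -
  obtain K where "K \<ge> 0" and K: "\<And>x. norm (d x) \<le> K * norm x"
    using d_bound by blast
  have "norm (d (fst w)) \<le> K * unorm w" for w
    using K[of "fst w"] mult_left_mono[OF norm_fst_le_unorm \<open>K \<ge> 0\<close>] by (rule order_trans)
  then show ?thesis
    by (rule bounded_ufunctional_dual_comp[OF f, rotated 2]) (simp_all add: uadd_def uscale_def d_add d_scale)
qed

lemma bounded_ufunctional_dual_action: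
  assumes f: "f \<in> dual_unit_ball scX"
  shows "bounded_ufunctional sc (\<lambda>w. f (lm (fst w) y + scX (snd w) y + lm c (d (fst w))))"
proof -
  obtain K where "K \<ge> 0" and K: "\<And>x. norm (d x) \<le> K * norm x"
    using d_bound by blast
  have "norm (lm (fst w) y + scX (snd w) y + lm c (d (fst w))) \<le> (norm y + norm y + norm c * K) * unorm w"
    for w
  proof -
    have "norm (lm c (d (fst w))) \<le> norm c * (K * norm (fst w))"
      using order_trans[OF norm_lm mult_left_mono[OF K norm_ge_zero]] .
    then have "norm (lm (fst w) y + scX (snd w) y + lm c (d (fst w)))
        \<le> norm (fst w) * norm y + cmod (snd w) * norm y + norm c * (K * norm (fst w))"
      by (intro norm_triangle_le add_mono norm_lm order_trans[OF norm_triangle_ineq])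
        (simp_all add: X.norm_scale)
    also have "\<dots> \<le> unorm w * norm y + unorm w * norm y + norm c * (K * unorm w)"
      using \<open>K \<ge> 0\<close>
      by (intro add_mono mult_right_mono mult_left_mono norm_fst_le_unorm norm_snd_le_unorm) simp_all
    finally show ?thesis
      by (simp add: algebra_simps)
  qed
  then show ?thesis
    by (rule bounded_ufunctional_dual_comp[OF f, rotated 2])
      (simp_all add: uadd_def uscale_def d_add d_scale lm_simps lm_scale_left lm_scale_right
        X.scale_add_right X.scale_add_left X.scale_scale algebra_simps)
qed

lemma commutator_in_kernel:
  assumes "sym_pseudo_amenable_unitization sc"
  shows "d (a * b - b * a) = 0"
proof (rule X.eq_0_if_dual_unit_ball_vanishes)
  fix f assume f: "f \<in> dual_unit_ball scX"
  have f_add: "f (x + y) = f x + f y" for x y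
    using f unfolding dual_unit_ball_def by blast
  have f_diff: "f (x - y) = f x - f y" for x y
    using f_add[of "x - y" y] by simp
  obtain F and t :: "'a tens \<Rightarrow> 'a tens" where "sym_approx_diag sc F t"
    using assms unfolding sym_pseudo_amenable_unitization_def by blast
  then interpret sym_approx_diagonal sc F t
    by unfold_locales
  define c where "c = a * b - b * a"
  define L where "L w = f (lm (fst w) (d c) + scX (snd w) (d c) + lm c (d (fst w)))" for w
  define \<phi> where "\<phi> u v = f (d (fst (umult sc (umult sc u (c, 0)) v)))" for u v
  define \<psi> where "\<psi> u v = f (d (fst (umult sc (umult sc v (b, 0)) u)))" for u v
  note fD = bounded_ufunctional_dual_d[OF f]
  have "bounded_cbilinear sc \<phi>"
    unfolding \<phi>_def by (intro bounded_cbilinear_umult_left bounded_cbilinear_umult fD)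
  moreover have "bounded_cbilinear sc \<psi>"
    unfolding \<psi>_def
    by (intro bounded_cbilinear_swap[of _ "\<lambda>v u. f (d (fst (umult sc (umult sc v (b, 0)) u)))"]
        bounded_cbilinear_umult_left bounded_cbilinear_umult fD)
  moreover have "\<phi> u v + \<phi> v u = L (umult sc u v) + L (umult sc v u)" for u v
    unfolding \<phi>_def L_def f_add[symmetric] by (rule arg_cong[where f = f], rule jordan_triple_unitization)
  moreover have "\<phi> v u = \<psi> u (umult sc v (a, 0)) - \<psi> (umult sc (a, 0) u) v" for u v
    unfolding \<phi>_def \<psi>_def c_def fst_umult_commutator[symmetric] d_diff f_diff ..
  ultimately have "L (0, 1) = 0"
    unfolding L_def by (rule functional_unit_eq_0[OF bounded_ufunctional_dual_action[OF f]])
  then show "f (d (a * b - b * a)) = 0"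
    by (simp add: L_def c_def lm_zero_left lm_zero_right d_zero X.scale_one)
qed

end

theorem corollary5p4:
  fixes sc :: "complex \<Rightarrow> 'a::{real_normed_algebra,banach} \<Rightarrow> 'a"
    and scX :: "complex \<Rightarrow> 'x::banach \<Rightarrow> 'x"
    and lm :: "'a \<Rightarrow> 'x \<Rightarrow> 'x" and rm :: "'x \<Rightarrow> 'a \<Rightarrow> 'x"
    and d :: "'a \<Rightarrow> 'x"
  assumes "cbanach_algebra sc"
    and "sym_pseudo_amenable_unitization sc"
    and "banach_bimodule sc scX lm rm"
    and "symmetric_bimodule lm rm"
    and "clinear_map sc scX d"
    and "bounded_map d"
    and "jordan_derivation lm rm d"
  shows "derivation lm rm d"
proof -
  interpret bounded_jordan_into_symmetric_bimodule sc scX lm rm d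
    using assms by (simp add: bounded_jordan_into_symmetric_bimodule_def complex_banach_algebra_def
        bounded_jordan_into_symmetric_bimodule_axioms_def)
  show ?thesis
    using commutator_in_kernel[OF assms(2)] by (rule derivation_if_commutators_in_kernel)
qed

end
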